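(* Assume (FWW) for a flow $\Phi_t$ on $\mathbb{R}^n$ and a $k$-cone $C$. Let $K\subset\mathbb{R}^n$ be a compact invariant set with a $k$-exponential separation $\mathbb{R}^n=E_y\oplus F_y$ ($y\in K$) of $(\Phi_t,D\Phi_t)$ along $K$ associated with $C$, and let $x\in K$ be a regular point with $\lambda_{kx}\le0$. Then there exists an open neighborhood $\mathcal{V}$ of $x$ such that for every $y\in\mathcal{V}$ one of the following holds: (a) $\|\Phi_t(x)-\Phi_t(y)\|\to0$ as $t\to+\infty$; (b) there exists $T>0$ such that $\Phi_T(x)-\Phi_T(y)\in C$, and hence $\Phi_t(x)-\Phi_t(y)\in\operatorname{Int}C$ for all $t>T$.
   Context: A closed set $C\subset\mathbb{R}^n$ is a $k$-cone if $lv\in C$ for all $v\in C$, $l\in\mathbb{R}$, and the maximal dimension of a linear subspace contained in $C$ is $k$. $C$ is $k$-solid if there is a $k$-dimensional subspace $W$ with $W\setminus\{0\}\subset\operatorname{Int}C$. Write $x\sim y$ if $x-y\in C$ and $x\approx y$ if $x-y\in\operatorname{Int}C$. A flow $\Phi_t$ is strongly monotone with respect to a $k$-solid cone $C$ if $x\sim y$ implies $\Phi_t(x)\sim\Phi_t(y)$ for $t\ge0$, and $x\ne y$, $x\sim y$ imply $\Phi_t(x)\approx\Phi_t(y)$ for $t>0$. Assumption (FWW): the flow $\Phi_t$ on $\mathbb{R}^n$ is $C^{1,\alpha}$-smooth ($C^1$ with locally $\alpha$-Hölder derivative, $\alpha\in(0,1]$), strongly monotone with respect to the $k$-cone $C$,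 and $D_x\Phi_t(C\setminus\{0\})\subset\operatorname{Int}C$ for $t>0$. A $k$-exponential separation along a compact invariant set $K$ associated with $C$ consists of continuous (in the Grassmannian gap metric) families of $k$-dimensional subspaces $E_x$ and $(n-k)$-dimensional subspaces $F_x$, $x\in K$, such that: $\mathbb{R}^n=E_x\oplus F_x$; $D_x\Phi_tE_x=E_{\Phi_t(x)}$, $D_x\Phi_tF_x\subset F_{\Phi_t(x)}$ for $t>0$; there are $M>0$, $0<\gamma<1$ with $\|D_x\Phi_tw\|\le M\gamma^t\|D_x\Phi_tv\|$ for all $x\in K$, unit $w\in F_x$, unit $v\in E_x$, $t\ge0$; and $E_x\subset\operatorname{Int}C\cup\{0\}$, $F_x\cap C=\{0\}$. The $k$-Lyapunov exponent of $x\in K$ is $\lambda_{kx}=\limsup_{t\to+\infty}t^{-1}\log\inf_{v\in E_x,\|v\|=1}\|D_x\Phi_tv\|$; $x$ is regular if this limsup is a limit. *)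

theory Defs
  imports "HOL-Analysis.Analysis"
begin

definition k_cone :: "'a::euclidean_space set \<Rightarrow> nat \<Rightarrow> bool" where
  "k_cone C k \<longleftrightarrow> closed C \<and> (\<forall>v\<in>C. \<forall>l::real. l *\<^sub>R v \<in> C)
     \<and> (\<exists>W. subspace W \<and> W \<subseteq> C \<and> dim W = k)
     \<and> (\<forall>W. subspace W \<and> W \<subseteq> C \<longrightarrow> dim W \<le> k)"

definition k_solid :: "'a::euclidean_space set \<Rightarrow> nat \<Rightarrow> bool" where
  "k_solid C k \<longleftrightarrow> (\<exists>W. subspace W \<and> dim W = k \<and> W - {0} \<subseteq> interior C)"

definition is_flow :: "(real \<Rightarrow> 'a::euclidean_space \<Rightarrow> 'a) \<Rightarrow> bool" where
  "is_flow \<Phi> \<longleftrightarrow> continuous_on UNIV (\<lambda>(t, x). \<Phi> t x) \<and> (\<forall>x. \<Phi> 0 x = x)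
     \<and> (\<forall>s t x. \<Phi> (s + t) x = \<Phi> s (\<Phi> t x))"

definition C1alpha_flow ::
  "(real \<Rightarrow> 'a::euclidean_space \<Rightarrow> 'a) \<Rightarrow> (real \<Rightarrow> 'a \<Rightarrow> 'a \<Rightarrow> 'a) \<Rightarrow> real \<Rightarrow> bool" where
  "C1alpha_flow \<Phi> D \<alpha> \<longleftrightarrow> is_flow \<Phi> \<and> 0 < \<alpha> \<and> \<alpha> \<le> 1
     \<and> (\<forall>t x. (\<Phi> t has_derivative D t x) (at x))
     \<and> (\<forall>t x. \<forall>e>0. \<exists>d>0. \<forall>s y. dist (s, y) (t, x) < d \<longrightarrow>
            onorm (\<lambda>v. D s y v - D t x v) < e)
     \<and> (\<forall>T::real. \<forall>S. compact S \<longrightarrow> (\<exists>L. \<forall>t. \<bar>t\<bar> \<le> T \<longrightarrow>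
            (\<forall>y\<in>S. \<forall>z\<in>S. onorm (\<lambda>v. D t y v - D t z v) \<le> L * dist y z powr \<alpha>)))"

definition strongly_monotone :: "(real \<Rightarrow> 'a::euclidean_space \<Rightarrow> 'a) \<Rightarrow> 'a set \<Rightarrow> bool" where
  "strongly_monotone \<Phi> C \<longleftrightarrow>
     (\<forall>x y t. x - y \<in> C \<and> t \<ge> 0 \<longrightarrow> \<Phi> t x - \<Phi> t y \<in> C)
   \<and> (\<forall>x y t. x \<noteq> y \<and> x - y \<in> C \<and> t > 0 \<longrightarrow> \<Phi> t x - \<Phi> t y \<in> interior C)"

definition FWW ::
  "(real \<Rightarrow> 'a::euclidean_space \<Rightarrow> 'a) \<Rightarrow> (real \<Rightarrow> 'a \<Rightarrow> 'a \<Rightarrow> 'a) \<Rightarrow> real \<Rightarrow> 'a set \<Rightarrow> nat \<Rightarrow> bool" where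
  "FWW \<Phi> D \<alpha> C k \<longleftrightarrow> C1alpha_flow \<Phi> D \<alpha> \<and> k_cone C k \<and> k_solid C k
     \<and> strongly_monotone \<Phi> C
     \<and> (\<forall>t>0. \<forall>x. \<forall>v\<in>C - {0}. D t x v \<in> interior C)"

definition subspace_gap :: "'a::euclidean_space set \<Rightarrow> 'a set \<Rightarrow> real" where
  "subspace_gap E F = max (Sup (insert 0 {infdist e F | e. e \<in> E \<and> norm e = 1}))
                          (Sup (insert 0 {infdist f E | f. f \<in> F \<and> norm f = 1}))"

definition gap_continuous_on :: "'a::euclidean_space set \<Rightarrow> ('a \<Rightarrow> 'a set) \<Rightarrow> bool" where
  "gap_continuous_on K E \<longleftrightarrow>
     (\<forall>x\<in>K. \<forall>e>0. \<exists>d>0. \<forall>y\<in>K. dist y x < d \<longrightarrow> subspace_gap (E y) (E x) < e)"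

definition invariant_set :: "(real \<Rightarrow> 'a \<Rightarrow> 'a) \<Rightarrow> 'a set \<Rightarrow> bool" where
  "invariant_set \<Phi> K \<longleftrightarrow> (\<forall>t. \<Phi> t ` K = K)"

definition exp_separation ::
  "(real \<Rightarrow> 'a::euclidean_space \<Rightarrow> 'a) \<Rightarrow> (real \<Rightarrow> 'a \<Rightarrow> 'a \<Rightarrow> 'a) \<Rightarrow> 'a set \<Rightarrow> nat
    \<Rightarrow> 'a set \<Rightarrow> ('a \<Rightarrow> 'a set) \<Rightarrow> ('a \<Rightarrow> 'a set) \<Rightarrow> bool" where
  "exp_separation \<Phi> D C k K E F \<longleftrightarrow>
     (\<forall>x\<in>K. subspace (E x) \<and> dim (E x) = k \<and> subspace (F x) \<and> dim (F x) = DIM('a) - k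
        \<and> E x \<inter> F x = {0} \<and> {u + w | u w. u \<in> E x \<and> w \<in> F x} = UNIV
        \<and> E x \<subseteq> interior C \<union> {0} \<and> F x \<inter> C = {0})
   \<and> gap_continuous_on K E \<and> gap_continuous_on K F
   \<and> (\<forall>x\<in>K. \<forall>t>0. D t x ` E x = E (\<Phi> t x) \<and> D t x ` F x \<subseteq> F (\<Phi> t x))
   \<and> (\<exists>M>0. \<exists>\<gamma>. 0 < \<gamma> \<and> \<gamma> < 1 \<and>
        (\<forall>x\<in>K. \<forall>t\<ge>0. \<forall>w\<in>F x. \<forall>v\<in>E x. norm w = 1 \<and> norm v = 1 \<longrightarrow>
            norm (D t x w) \<le> M * \<gamma> powr t * norm (D t x v)))"

definition lyap_quot :: "(real \<Rightarrow> 'a::euclidean_space \<Rightarrow> 'a \<Rightarrow> 'a) \<Rightarrow> ('a \<Rightarrow> 'a set) \<Rightarrow> 'a \<Rightarrow> real \<Rightarrow> real" where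
  "lyap_quot D E x t = ln (INF v\<in>{v \<in> E x. norm v = 1}. norm (D t x v)) / t"

definition k_lyapunov :: "(real \<Rightarrow> 'a::euclidean_space \<Rightarrow> 'a \<Rightarrow> 'a) \<Rightarrow> ('a \<Rightarrow> 'a set) \<Rightarrow> 'a \<Rightarrow> ereal" where
  "k_lyapunov D E x = Limsup at_top (\<lambda>t. ereal (lyap_quot D E x t))"

definition lyap_regular :: "(real \<Rightarrow> 'a::euclidean_space \<Rightarrow> 'a \<Rightarrow> 'a) \<Rightarrow> ('a \<Rightarrow> 'a set) \<Rightarrow> 'a \<Rightarrow> bool" where
  "lyap_regular D E x \<longleftrightarrow> (\<exists>L. ((\<lambda>t. ereal (lyap_quot D E x t)) \<longlongrightarrow> L) at_top)"

end

theory Submission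
  imports Defs
begin

(*
  Work along the time-one orbit x_n = Phi_n(x), which stays in K. Compactness of K and gap
  continuity of the splitting give uniform angles: the F-component of a vector is bounded by a
  multiple of the vector, and a uniform cone around each E_z lies in C, so a vector outside C is
  dominated by its F-component. Regularity with lambda <= 0 makes the growth in E subexponential
  up to a tempered error; through the exponential separation, F-vectors at x_j then contract at a
  rate gamma * exp eps < 1, up to a factor exp (2 eps j).

  If the difference w_n = Phi_n(y) - x_n never enters C, its F-component controls it and obeys
  the linearised recursion, forced by the C^{1,alpha} remainder of size |w_n|^{1+alpha}. Choosing
  eps so small that exp (2 eps) (gamma exp eps)^alpha < 1, a discrete Gronwall induction shows that
  this component decays geometrically when y is close to x, and uniform continuity of the flow over
  unit times passes from integer to real times. Otherwise the difference lies in C at some time,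
  and strong monotonicity pushes it into the interior of C afterwards.
*)

section \<open>Estimates for real sequences\<close>

lemma tempered_bound_of_LIMSEQ_div:
  fixes a :: "nat \<Rightarrow> real"
  assumes "\<epsilon> > 0" and "(\<lambda>n. a n / real n) \<longlonglongrightarrow> l"
  shows "\<exists>A\<ge>0. \<forall>n. \<bar>a n - l * real n\<bar> \<le> \<epsilon> * real n + A"
proof -
  obtain N where N: "\<forall>n\<ge>N. \<bar>a n / real n - l\<bar> < \<epsilon>"
    using assms unfolding LIMSEQ_def dist_real_def by blast
  define A where "A = (\<Sum>i<max N 1. \<bar>a i - l * real i\<bar>)"
  have "A \<ge> 0" unfolding A_def by (rule sum_nonneg) simp
  have "\<bar>a n - l * real n\<bar> \<le> \<epsilon> * real n + A" for n
  proof (cases "n < max N 1")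
    case True
    then have "\<bar>a n - l * real n\<bar> \<le> A" unfolding A_def by (intro member_le_sum) auto
    then show ?thesis using \<open>\<epsilon> > 0\<close> by (simp add: add_increasing)
  next
    case False
    then have "n \<ge> N" "n \<ge> 1" by auto
    have eq: "(a n - l * real n) / real n = a n / real n - l" using \<open>n \<ge> 1\<close> by (simp add: field_simps)
    have "\<bar>(a n - l * real n) / real n\<bar> < \<epsilon>" unfolding eq using N \<open>n \<ge> N\<close> by blast
    then have "\<bar>a n - l * real n\<bar> / real n < \<epsilon>" by simp
    then show ?thesis using \<open>n \<ge> 1\<close> \<open>A \<ge> 0\<close> by (simp add: field_simps)
  qed
  then show ?thesis using \<open>A \<ge> 0\<close> by blast
qed

lemma ratio_le_of_tempered_bound:
  fixes g :: "nat \<Rightarrow> real"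
  assumes pos: "\<And>n. g n > 0" and "l \<le> 0" and A: "\<And>n. \<bar>ln (g n) - l * real n\<bar> \<le> \<epsilon> * real n + A"
  shows "g (j + m) / g j \<le> exp (2 * A) * exp \<epsilon> ^ m * exp (2 * \<epsilon>) ^ j"
proof -
  have "ln (g (j + m)) - ln (g j) \<le> 2 * A + real m * \<epsilon> + real j * (2 * \<epsilon>)"
    using A[of "j + m"] A[of j] \<open>l \<le> 0\<close> mult_nonpos_nonneg[of l "real m"]
    by (simp add: abs_le_iff algebra_simps)
  then have "exp (ln (g (j + m)) - ln (g j)) \<le> exp (2 * A + real m * \<epsilon> + real j * (2 * \<epsilon>))"
    by simp
  then show ?thesis using pos[of "j + m"] pos[of j] by (simp add: exp_diff exp_add exp_of_nat_mult)
qed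

lemma exists_contraction_margin:
  fixes \<gamma> \<alpha> :: real
  assumes "0 < \<gamma>" "\<gamma> < 1" "0 < \<alpha>"
  shows "\<exists>\<epsilon>>0. \<gamma> * exp \<epsilon> < 1 \<and> exp (2 * \<epsilon>) * (\<gamma> * exp \<epsilon>) powr \<alpha> < 1"
proof -
  have "((\<lambda>\<epsilon>. \<gamma> * exp \<epsilon>) \<longlongrightarrow> \<gamma>) (at_right 0)"
    by (auto intro!: tendsto_eq_intros)
  from order_tendstoD(2)[OF this \<open>\<gamma> < 1\<close>]
  have rate: "\<forall>\<^sub>F \<epsilon> in at_right 0. \<gamma> * exp \<epsilon> < 1" .
  have "((\<lambda>\<epsilon>. exp (2 * \<epsilon>) * (\<gamma> * exp \<epsilon>) powr \<alpha>) \<longlongrightarrow> \<gamma> powr \<alpha>) (at_right 0)"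
    using assms by (auto intro!: tendsto_eq_intros)
  moreover have "\<gamma> powr \<alpha> < 1" using powr_less_mono2[of \<alpha> \<gamma> 1] assms by simp
  ultimately have rate_holder: "\<forall>\<^sub>F \<epsilon> in at_right 0. exp (2 * \<epsilon>) * (\<gamma> * exp \<epsilon>) powr \<alpha> < 1"
    by (rule order_tendstoD(2))
  have "\<forall>\<^sub>F \<epsilon> in at_right (0::real). \<epsilon> > 0"
    by (simp add: eventually_at_right_less)
  with rate rate_holder have "\<forall>\<^sub>F \<epsilon> in at_right (0::real). \<epsilon> > 0 \<and> \<gamma> * exp \<epsilon> < 1
      \<and> exp (2 * \<epsilon>) * (\<gamma> * exp \<epsilon>) powr \<alpha> < 1"
    by eventually_elim auto
  from eventually_happens'[OF _ this] show ?thesis by simp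
qed

lemma exists_radius_powr_le:
  fixes Q \<rho> \<alpha> :: real
  assumes "Q \<ge> 0" "\<rho> > 0" "\<alpha> > 0"
  shows "\<exists>r>0. \<forall>s. 0 \<le> s \<and> s \<le> r \<longrightarrow> s \<le> 1 \<and> Q * s powr \<alpha> \<le> \<rho>"
proof -
  define r where "r = min 1 ((\<rho> / (Q + 1)) powr (1 / \<alpha>))"
  have "r > 0" unfolding r_def using assms by simp
  have "s \<le> 1 \<and> Q * s powr \<alpha> \<le> \<rho>" if "0 \<le> s" "s \<le> r" for s
  proof
    show "s \<le> 1" using that unfolding r_def by simp
    have "s powr \<alpha> \<le> ((\<rho> / (Q + 1)) powr (1 / \<alpha>)) powr \<alpha>"
      using that assms unfolding r_def by (intro powr_mono2) auto
    also have "\<dots> = \<rho> / (Q + 1)" using assms by (simp add: powr_powr)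
    finally have "Q * s powr \<alpha> \<le> Q * (\<rho> / (Q + 1))" using assms by (intro mult_left_mono)
    also have "\<dots> \<le> \<rho>" using assms by (simp add: field_simps)
    finally show "Q * s powr \<alpha> \<le> \<rho>" .
  qed
  then show ?thesis using \<open>r > 0\<close> by blast
qed

lemma holder_remainder_le_geometric:
  fixes p p0 b :: real
  assumes "0 < \<rho>" "\<rho> < 1" "0 < \<alpha>" "G \<ge> 0" "c > 0" "K0 \<ge> 1" "p0 \<ge> 0" "p \<ge> 0"
    and p: "p \<le> 2 * K0 * \<rho> ^ j * p0" and small: "2 * c * K0 * p0 \<le> 1"
    and b: "c * p \<le> 1 \<Longrightarrow> b \<le> G * p * (c * p) powr \<alpha>"
  shows "b \<le> 2 * K0 * G * (2 * c * K0 * p0) powr \<alpha> * p0 * (\<rho> * \<rho> powr \<alpha>) ^ j"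
proof -
  let ?\<kappa> = "2 * c * K0 * p0"
  have cp: "c * p \<le> ?\<kappa> * \<rho> ^ j" using mult_left_mono[OF p, of c] \<open>c > 0\<close> by (simp add: ac_simps)
  also have "\<dots> \<le> ?\<kappa>" using assms by (simp add: mult_left_le power_le_one)
  finally have "b \<le> G * p * (c * p) powr \<alpha>" using small b by linarith
  also have "\<dots> \<le> G * (2 * K0 * \<rho> ^ j * p0) * (?\<kappa> * \<rho> ^ j) powr \<alpha>"
    using assms cp by (intro mult_mono[OF mult_left_mono[OF p] powr_mono2]) auto
  also have "(?\<kappa> * \<rho> ^ j) powr \<alpha> = ?\<kappa> powr \<alpha> * (\<rho> powr \<alpha>) ^ j"
    using assms by (simp add: powr_mult powr_power powr_powr mult.commute flip: powr_realpow)
  finally show ?thesis by (simp add: power_mult_distrib ac_simps)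
qed

lemma holder_perturbed_geometric_decay:
  fixes \<phi> \<beta> :: "nat \<Rightarrow> real"
  assumes "0 < \<rho>" "\<rho> < 1" "\<tau> > 0" "0 < \<alpha>" "\<tau> * \<rho> powr \<alpha> < 1" "K0 \<ge> 1" "G \<ge> 0" "c > 0"
    and recursion: "\<And>N. \<phi> N \<le> K0 * \<rho> ^ N * \<phi> 0 + (\<Sum>j<N. K0 * \<rho> ^ (N - Suc j) * \<tau> ^ Suc j * \<beta> j)"
    and holder: "\<And>j. c * \<phi> j \<le> 1 \<Longrightarrow> \<beta> j \<le> G * \<phi> j * (c * \<phi> j) powr \<alpha>"
    and nonneg: "\<And>j. 0 \<le> \<phi> j"
    and small: "2 * c * K0 * \<phi> 0 \<le> 1"
    and small_holder: "2 * K0 * G * \<tau> / (1 - \<tau> * \<rho> powr \<alpha>) * (2 * c * K0 * \<phi> 0) powr \<alpha> \<le> \<rho>"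
  shows "\<phi> N \<le> 2 * K0 * \<rho> ^ N * \<phi> 0"
proof (induction N rule: less_induct)
  case (less N)
  (* By induction, the forcing terms are dominated by a geometric series of ratio
     q = tau * rho powr alpha; smallness of phi 0 makes its sum at most K0 * rho ^ N * phi 0. *)
  define q where "q = \<tau> * \<rho> powr \<alpha>"
  define Z where "Z = (2 * c * K0 * \<phi> 0) powr \<alpha>"
  define P where "P = 2 * K0 * K0 * G * Z * \<tau> * \<phi> 0 * \<rho> ^ (N - 1)"
  have "0 < q" "q < 1" using assms unfolding q_def by auto
  have "P \<ge> 0" unfolding P_def Z_def using assms nonneg[of 0] by simp
  have term_le: "K0 * \<rho> ^ (N - Suc j) * \<tau> ^ Suc j * \<beta> j \<le> P * q ^ j" if "j < N" for j
  proof -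
    have "\<beta> j \<le> 2 * K0 * G * Z * \<phi> 0 * (\<rho> * \<rho> powr \<alpha>) ^ j"
      unfolding Z_def using assms nonneg less.IH[OF that] small holder
      by (intro holder_remainder_le_geometric) auto
    then have "K0 * \<rho> ^ (N - Suc j) * \<tau> ^ Suc j * \<beta> j
        \<le> K0 * \<rho> ^ (N - Suc j) * \<tau> ^ Suc j * (2 * K0 * G * Z * \<phi> 0 * (\<rho> * \<rho> powr \<alpha>) ^ j)"
      using assms by (intro mult_left_mono) auto
    also have "\<dots> = 2 * K0 * K0 * G * Z * \<tau> * \<phi> 0 * (\<rho> ^ (N - Suc j) * \<rho> ^ j) * (\<tau> * \<rho> powr \<alpha>) ^ j"
      by (simp add: power_mult_distrib algebra_simps)
    also have "\<rho> ^ (N - Suc j) * \<rho> ^ j = \<rho> ^ (N - 1)"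
      using that by (simp flip: power_add)
    finally show ?thesis unfolding P_def q_def .
  qed
  have "(\<Sum>j<N. K0 * \<rho> ^ (N - Suc j) * \<tau> ^ Suc j * \<beta> j) \<le> P * (\<Sum>j<N. q ^ j)"
    unfolding sum_distrib_left by (rule sum_mono) (use term_le in simp)
  also have "\<dots> \<le> P * (1 / (1 - q))"
    using geometric_sum_less[OF \<open>0 < q\<close> \<open>q < 1\<close>, of "{..<N}"] \<open>P \<ge> 0\<close>
    by (intro mult_left_mono) auto
  also have "\<dots> = (2 * K0 * G * \<tau> / (1 - q) * Z) * (K0 * \<phi> 0 * \<rho> ^ (N - 1))"
    unfolding P_def by simp
  also have "\<dots> \<le> \<rho> * (K0 * \<phi> 0 * \<rho> ^ (N - 1))"
    using small_holder assms nonneg[of 0] unfolding q_def Z_def by (intro mult_right_mono) auto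
  finally have "(\<Sum>j<N. K0 * \<rho> ^ (N - Suc j) * \<tau> ^ Suc j * \<beta> j) \<le> \<rho> * (K0 * \<phi> 0 * \<rho> ^ (N - 1))" .
  moreover have "\<rho> * (K0 * \<phi> 0 * \<rho> ^ (N - 1)) \<le> K0 * \<rho> ^ N * \<phi> 0"
    using assms nonneg[of 0] by (cases N) (auto intro: mult_left_le_one_le)
  ultimately show ?case using recursion[of N] by simp
qed

section \<open>Gap continuity and uniform cone estimates\<close>

lemma infdist_le_subspace_gap:
  fixes G H :: "'a::euclidean_space set"
  assumes "subspace H" "g \<in> G" "norm g = 1"
  shows "infdist g H \<le> subspace_gap G H"
proof -
  let ?S = "insert 0 {infdist e H | e. e \<in> G \<and> norm e = 1}"
  have "0 \<in> H" using assms(1) subspace_0 by blast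
  have "infdist e H \<le> 1" if "norm e = 1" for e
    using infdist_le[OF \<open>0 \<in> H\<close>, of e] that by simp
  then have "bdd_above ?S"
    by (intro bdd_aboveI[of _ 1]) auto
  then have "infdist g H \<le> Sup ?S" by (rule cSup_upper[rotated]) (use assms in blast)
  then show ?thesis unfolding subspace_gap_def by linarith
qed

lemma gap_continuous_limit_mem:
  fixes G :: "'a::euclidean_space \<Rightarrow> 'a set"
  assumes gc: "gap_continuous_on K G" and sub: "subspace (G z0)" and "z0 \<in> K"
    and z: "\<And>n. z n \<in> K" "z \<longlonglongrightarrow> z0"
    and g: "\<And>n. g n \<in> G (z n)" "\<And>n. norm (g n) = 1" "g \<longlonglongrightarrow> g0"
  shows "g0 \<in> G z0"
proof -
  have "infdist g0 (G z0) \<le> e" if "e > 0" for e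
  proof -
    obtain d where "d > 0" and d: "\<forall>y\<in>K. dist y z0 < d \<longrightarrow> subspace_gap (G y) (G z0) < e / 2"
      using gc \<open>z0 \<in> K\<close> \<open>e > 0\<close> unfolding gap_continuous_on_def by (meson half_gt_zero)
    have "\<forall>\<^sub>F n in sequentially. dist (z n) z0 < d \<and> dist (g n) g0 < e / 2"
      using tendstoD[OF z(2) \<open>d > 0\<close>] tendstoD[OF g(3), of "e / 2"] \<open>e > 0\<close>
      by (auto intro: eventually_conj)
    then obtain n where n: "dist (z n) z0 < d" "dist (g n) g0 < e / 2"
      by (auto simp: eventually_sequentially)
    have "infdist (g n) (G z0) \<le> subspace_gap (G (z n)) (G z0)"
      using infdist_le_subspace_gap[OF sub g(1,2)] .
    also have "\<dots> < e / 2" using d n z(1) by blast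
    finally show ?thesis
      using infdist_triangle[of g0 "G z0" "g n"] n(2) by (simp add: dist_commute)
  qed
  then have "infdist g0 (G z0) \<le> 0" by (meson dense not_le)
  then have "infdist g0 (G z0) = 0" using infdist_nonneg by (metis antisym)
  moreover have "closed (G z0)" "G z0 \<noteq> {}" using sub closed_subspace subspace_0 by auto
  ultimately show ?thesis using in_closed_iff_infdist_zero by blast
qed

lemma compact_unit_spheres_gap_continuous:
  fixes G :: "'a::euclidean_space \<Rightarrow> 'a set"
  assumes K: "compact K" and gc: "gap_continuous_on K G" and sub: "\<And>z. z \<in> K \<Longrightarrow> subspace (G z)"
  shows "compact {g. \<exists>z\<in>K. g \<in> G z \<and> norm g = 1}"
proof -
  define T where "T = {p \<in> K \<times> sphere (0::'a) 1. snd p \<in> G (fst p)}"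
  have "closed T" unfolding closed_sequential_limits
  proof (intro allI impI)
    fix p and l :: "'a \<times> 'a" assume "(\<forall>n. p n \<in> T) \<and> p \<longlonglongrightarrow> l"
    then have pT: "\<And>n. p n \<in> T" and lim: "p \<longlonglongrightarrow> l" by auto
    obtain z0 g0 where l: "l = (z0, g0)" by fastforce
    have limz: "(\<lambda>n. fst (p n)) \<longlonglongrightarrow> z0" and limg: "(\<lambda>n. snd (p n)) \<longlonglongrightarrow> g0"
      using tendsto_fst[OF lim] tendsto_snd[OF lim] unfolding l by auto
    have z0: "z0 \<in> K"
      by (rule closed_sequentially[OF compact_imp_closed[OF K] _ limz])
        (use pT in \<open>auto simp: T_def mem_Times_iff\<close>)
    have g0: "g0 \<in> sphere 0 1"
      by (rule closed_sequentially[OF closed_sphere _ limg]) (use pT in \<open>auto simp: T_def mem_Times_iff\<close>)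
    have pn: "fst (p n) \<in> K" "snd (p n) \<in> G (fst (p n))" "norm (snd (p n)) = 1" for n
      using pT[of n] unfolding T_def by (auto simp: mem_Times_iff)
    have "g0 \<in> G z0" by (rule gap_continuous_limit_mem[OF gc sub[OF z0] z0 pn(1) limz pn(2,3) limg])
    then show "l \<in> T" unfolding T_def l using z0 g0 by simp
  qed
  moreover have "compact (K \<times> sphere (0::'a) 1)" using K by (simp add: compact_Times)
  ultimately have "compact (T \<inter> (K \<times> sphere 0 1))" by (rule closed_Int_compact)
  moreover have "T \<inter> (K \<times> sphere 0 1) = T" unfolding T_def by blast
  ultimately have "compact T" by simp
  then have "compact (snd ` T)" by (rule compact_continuous_image[OF continuous_on_snd[OF continuous_on_id]])
  moreover have "snd ` T = {g. \<exists>z\<in>K. g \<in> G z \<and> norm g = 1}"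
  proof
    show "snd ` T \<subseteq> {g. \<exists>z\<in>K. g \<in> G z \<and> norm g = 1}"
      unfolding T_def by (auto simp: mem_Times_iff)
    show "{g. \<exists>z\<in>K. g \<in> G z \<and> norm g = 1} \<subseteq> snd ` T"
    proof
      fix g assume "g \<in> {g. \<exists>z\<in>K. g \<in> G z \<and> norm g = 1}"
      then obtain z where "(z, g) \<in> T" unfolding T_def by auto
      then show "g \<in> snd ` T" by (rule rev_image_eqI) simp
    qed
  qed
  ultimately show ?thesis by simp
qed

lemma gap_continuous_uniform_separation:
  fixes G :: "'a::euclidean_space \<Rightarrow> 'a set"
  assumes "compact K" "gap_continuous_on K G" "\<And>z. z \<in> K \<Longrightarrow> subspace (G z)"
    and "closed A" "\<And>z g. z \<in> K \<Longrightarrow> g \<in> G z \<Longrightarrow> norm g = 1 \<Longrightarrow> g \<notin> A"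
  shows "\<exists>\<delta>>0. \<forall>z\<in>K. \<forall>g\<in>G z. norm g = 1 \<longrightarrow> (\<forall>a\<in>A. \<delta> \<le> dist g a)"
proof -
  have "{g. \<exists>z\<in>K. g \<in> G z \<and> norm g = 1} \<inter> A = {}" using assms(5) by blast
  from separate_compact_closed[OF compact_unit_spheres_gap_continuous[OF assms(1-3)] assms(4) this]
  show ?thesis by blast
qed

lemma uniformly_transversal_to_cone:
  fixes F :: "'a::euclidean_space \<Rightarrow> 'a set"
  assumes "compact K" "gap_continuous_on K F" "\<And>z. z \<in> K \<Longrightarrow> subspace (F z)"
    and "closed C" "\<And>v l. v \<in> C \<Longrightarrow> l *\<^sub>R v \<in> C" "\<And>z. z \<in> K \<Longrightarrow> F z \<inter> C = {0}"
  shows "\<exists>\<delta>>0. \<forall>z\<in>K. \<forall>f\<in>F z. \<forall>c\<in>C. \<delta> * norm f \<le> norm (f - c)"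
proof -
  have "g \<notin> C" if "z \<in> K" "g \<in> F z" "norm g = 1" for z g
  proof
    assume "g \<in> C"
    then have "g = 0" using assms(6)[OF that(1)] that(2) by blast
    then show False using that(3) by simp
  qed
  then obtain \<delta> where "\<delta> > 0" and \<delta>: "\<forall>z\<in>K. \<forall>g\<in>F z. norm g = 1 \<longrightarrow> (\<forall>a\<in>C. \<delta> \<le> dist g a)"
    using gap_continuous_uniform_separation[OF assms(1-4)] by blast
  have "\<delta> * norm f \<le> norm (f - c)" if z: "z \<in> K" and f: "f \<in> F z" and c: "c \<in> C" for z f c
  proof (cases "f = 0")
    case False
    then have n: "norm f > 0" by simp
    have "(1 / norm f) *\<^sub>R f \<in> F z" using assms(3)[OF z] f subspace_scale by blast
    moreover have "(1 / norm f) *\<^sub>R c \<in> C" using assms(5) c by blast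
    ultimately have "\<delta> \<le> dist ((1 / norm f) *\<^sub>R f) ((1 / norm f) *\<^sub>R c)" using \<delta> z n by simp
    also have "\<dots> = norm (f - c) / norm f"
      by (simp add: dist_norm n flip: scaleR_diff_right)
    finally show ?thesis using n by (simp add: field_simps)
  qed simp
  then show ?thesis using \<open>\<delta> > 0\<close> by blast
qed

lemma uniform_cone_neighbourhood:
  fixes E :: "'a::euclidean_space \<Rightarrow> 'a set"
  assumes "compact K" "gap_continuous_on K E" "\<And>z. z \<in> K \<Longrightarrow> subspace (E z)"
    and "\<And>v l. v \<in> C \<Longrightarrow> l *\<^sub>R v \<in> C" "\<And>z. z \<in> K \<Longrightarrow> E z \<subseteq> interior C \<union> {0}"
  shows "\<exists>\<delta>>0. \<forall>z\<in>K. \<forall>e\<in>E z. \<forall>u. norm u < \<delta> * norm e \<longrightarrow> e + u \<in> C"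
proof -
  have "g \<notin> closure (- C)" if "z \<in> K" "g \<in> E z" "norm g = 1" for z g
    using assms(5) that by (fastforce simp: closure_complement)
  then obtain \<delta> where "\<delta> > 0"
    and \<delta>: "\<forall>z\<in>K. \<forall>g\<in>E z. norm g = 1 \<longrightarrow> (\<forall>a\<in>closure (- C). \<delta> \<le> dist g a)"
    using gap_continuous_uniform_separation[OF assms(1-3) closed_closure] by blast
  have "e + u \<in> C" if z: "z \<in> K" and e: "e \<in> E z" and u: "norm u < \<delta> * norm e" for z e u
  proof (rule ccontr)
    assume nC: "e + u \<notin> C"
    have "\<delta> * norm e > 0" using u norm_ge_zero[of u] by linarith
    then have n: "norm e > 0" using \<open>\<delta> > 0\<close> by (simp add: zero_less_mult_iff)
    have "(1 / norm e) *\<^sub>R e \<in> E z" using assms(3)[OF z] e subspace_scale by blast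
    moreover have "(1 / norm e) *\<^sub>R (e + u) \<notin> C"
      using assms(4)[of "(1 / norm e) *\<^sub>R (e + u)" "norm e"] nC n by auto
    then have "(1 / norm e) *\<^sub>R (e + u) \<in> closure (- C)" using closure_subset by blast
    ultimately have "\<delta> \<le> dist ((1 / norm e) *\<^sub>R e) ((1 / norm e) *\<^sub>R (e + u))"
      using \<delta> z n by simp
    also have "\<dots> = norm u / norm e"
      using n by (simp add: dist_norm flip: scaleR_diff_right)
    finally show False using n u by (simp add: field_simps)
  qed
  then show ?thesis using \<open>\<delta> > 0\<close> by blast
qed

section \<open>Flows\<close>

locale continuous_flow =
  fixes \<Phi> :: "real \<Rightarrow> 'a::euclidean_space \<Rightarrow> 'a"
  assumes is_flow: "is_flow \<Phi>"
begin

lemma flow_zero [simp]: "\<Phi> 0 z = z"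
  using is_flow unfolding is_flow_def by simp

lemma flow_add: "\<Phi> (s + t) z = \<Phi> s (\<Phi> t z)"
  using is_flow unfolding is_flow_def by simp

lemma flow_eqD: "\<Phi> t a = \<Phi> t b \<Longrightarrow> a = b"
  by (metis add.left_inverse flow_add flow_zero)

lemma flow_uniformly_continuous_unit_times:
  assumes "compact S" "e > 0"
  shows "\<exists>d>0. \<forall>s\<in>{0..1}. \<forall>z\<in>S. \<forall>u. norm u < d \<longrightarrow> norm (\<Phi> s (z + u) - \<Phi> s z) < e"
proof -
  define S' where "S' = {a + b | a b. a \<in> S \<and> b \<in> cball (0::'a) 1}"
  have "compact ({0..1::real} \<times> S')"
    unfolding S'_def by (intro compact_Times compact_sums assms compact_cball compact_Icc)
  moreover have "continuous_on ({0..1::real} \<times> S') (\<lambda>(t, x). \<Phi> t x)"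
    using is_flow continuous_on_subset unfolding is_flow_def by blast
  ultimately have "uniformly_continuous_on ({0..1::real} \<times> S') (\<lambda>(t, x). \<Phi> t x)"
    using compact_uniformly_continuous by blast
  then obtain d where "d > 0" and d: "\<forall>p\<in>{0..1::real} \<times> S'. \<forall>q\<in>{0..1::real} \<times> S'. dist q p < d \<longrightarrow>
       dist ((\<lambda>(t, x). \<Phi> t x) q) ((\<lambda>(t, x). \<Phi> t x) p) < e"
    using \<open>e > 0\<close> unfolding uniformly_continuous_on_def by blast
  have "norm (\<Phi> s (z + u) - \<Phi> s z) < e"
    if s: "s \<in> {0..1}" and z: "z \<in> S" and u: "norm u < min d 1" for s z u
  proof -
    have "z \<in> S'" "z + u \<in> S'" unfolding S'_def using z u by force+
    moreover have "dist (s, z + u) (s, z) < d" using u by (simp add: dist_Pair_Pair dist_norm)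
    ultimately show ?thesis using d s by (force simp: dist_norm)
  qed
  then show ?thesis using \<open>d > 0\<close> by (intro exI[of _ "min d 1"]) auto
qed

lemma tendsto_flow_difference_of_sequentially:
  assumes "compact S" and orbit: "\<And>n. \<Phi> (real n) x \<in> S"
    and lim: "(\<lambda>n. norm (\<Phi> (real n) y - \<Phi> (real n) x)) \<longlonglongrightarrow> 0"
  shows "((\<lambda>t. norm (\<Phi> t x - \<Phi> t y)) \<longlongrightarrow> 0) at_top"
proof (rule tendstoI)
  fix e :: real assume "e > 0"
  obtain d where "d > 0"
    and d: "\<forall>s\<in>{0..1}. \<forall>z\<in>S. \<forall>u. norm u < d \<longrightarrow> norm (\<Phi> s (z + u) - \<Phi> s z) < e"
    using flow_uniformly_continuous_unit_times[OF \<open>compact S\<close> \<open>e > 0\<close>] by blast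
  obtain N where N: "\<forall>n\<ge>N. norm (\<Phi> (real n) y - \<Phi> (real n) x) < d"
    using lim \<open>d > 0\<close> unfolding LIMSEQ_def by (auto simp: dist_real_def)
  have "dist (norm (\<Phi> t x - \<Phi> t y)) 0 < e" if t: "t \<ge> real N" for t
  proof -
    define n where "n = nat \<lfloor>t\<rfloor>"
    have "real n \<le> t" "t < real n + 1" "n \<ge> N"
      using t unfolding n_def by (auto simp: le_nat_floor)
    define u where "u = \<Phi> (real n) y - \<Phi> (real n) x"
    have "\<Phi> t y = \<Phi> (t - real n) (\<Phi> (real n) x + u)" "\<Phi> t x = \<Phi> (t - real n) (\<Phi> (real n) x)"
      unfolding u_def by (simp_all flip: flow_add)
    moreover have "norm u < d" unfolding u_def using N \<open>n \<ge> N\<close> by blast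
    ultimately show ?thesis
      using d orbit \<open>real n \<le> t\<close> \<open>t < real n + 1\<close> by (simp add: norm_minus_commute)
  qed
  then show "\<forall>\<^sub>F t in at_top. dist (norm (\<Phi> t x - \<Phi> t y)) 0 < e"
    unfolding eventually_at_top_linorder by blast
qed

lemma strongly_monotone_enters_interior:
  assumes "strongly_monotone \<Phi> C" "x \<noteq> y" "t \<ge> 0" "\<Phi> t x - \<Phi> t y \<in> C"
  shows "\<exists>T>0. \<Phi> T x - \<Phi> T y \<in> C \<and> (\<forall>t'>T. \<Phi> t' x - \<Phi> t' y \<in> interior C)"
proof (intro exI conjI allI impI)
  show "t + 1 > 0" using \<open>t \<ge> 0\<close> by simp
  show C: "\<Phi> (t + 1) x - \<Phi> (t + 1) y \<in> C"
    using assms(1,4) unfolding strongly_monotone_def by (simp add: flow_add add.commute)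
  fix t' assume "t' > t + 1"
  moreover have "\<Phi> (t + 1) x \<noteq> \<Phi> (t + 1) y" using \<open>x \<noteq> y\<close> flow_eqD by blast
  ultimately have "\<Phi> (t' - (t + 1)) (\<Phi> (t + 1) x) - \<Phi> (t' - (t + 1)) (\<Phi> (t + 1) y) \<in> interior C"
    using assms(1) C unfolding strongly_monotone_def by simp
  then show "\<Phi> t' x - \<Phi> t' y \<in> interior C" by (simp flip: flow_add)
qed

end

locale smooth_flow =
  fixes \<Phi> :: "real \<Rightarrow> 'a::euclidean_space \<Rightarrow> 'a" and D :: "real \<Rightarrow> 'a \<Rightarrow> 'a \<Rightarrow> 'a"
    and \<alpha> :: real
  assumes C1alpha: "C1alpha_flow \<Phi> D \<alpha>"

sublocale smooth_flow \<subseteq> continuous_flow \<Phi>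
  using C1alpha by unfold_locales (simp add: C1alpha_flow_def)

context smooth_flow
begin

lemma has_derivative_flow: "(\<Phi> t has_derivative D t z) (at z)"
  using C1alpha unfolding C1alpha_flow_def by blast

lemma bounded_linear_D: "bounded_linear (D t z)"
  using has_derivative_flow by (rule has_derivative_bounded_linear)

lemma linear_D: "linear (D t z)"
  using bounded_linear_D bounded_linear.linear by blast

lemma alpha_pos: "0 < \<alpha>"
  using C1alpha unfolding C1alpha_flow_def by blast

lemma holder_D:
  assumes "compact S"
  shows "\<exists>L. \<forall>t. \<bar>t\<bar> \<le> T \<longrightarrow> (\<forall>y\<in>S. \<forall>z\<in>S. onorm (\<lambda>v. D t y v - D t z v) \<le> L * dist y z powr \<alpha>)"
  using C1alpha assms unfolding C1alpha_flow_def by blast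

lemma D_cocycle: "D (s + t) z v = D s (\<Phi> t z) (D t z v)"
proof -
  have "\<Phi> (s + t) = \<Phi> s \<circ> \<Phi> t" by (auto simp: fun_eq_iff flow_add)
  moreover have "(\<Phi> s \<circ> \<Phi> t has_derivative D s (\<Phi> t z) \<circ> D t z) (at z)"
    by (rule diff_chain_at[OF has_derivative_flow has_derivative_flow])
  ultimately have "D (s + t) z = D s (\<Phi> t z) \<circ> D t z"
    using has_derivative_flow[of "s + t" z] has_derivative_unique by metis
  then show ?thesis by simp
qed

lemma D_zero [simp]: "D 0 z v = v"
proof -
  have "\<Phi> 0 = id" by (simp add: fun_eq_iff)
  then have "(\<Phi> 0 has_derivative id) (at z)" using has_derivative_id by simp
  then have "D 0 z = id" using has_derivative_flow[of 0 z] has_derivative_unique by blast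
  then show ?thesis by simp
qed

lemma D_inverse: "D (-t) (\<Phi> t z) (D t z v) = v"
  using D_cocycle[of "-t" t z v] by simp

lemma onorm_D_bounded:
  assumes "compact S"
  shows "\<exists>B. \<forall>z\<in>S. onorm (D t z) \<le> B"
proof (cases "S = {}")
  case False
  then obtain z0 where "z0 \<in> S" by blast
  obtain L where L: "\<forall>y\<in>S. \<forall>z\<in>S. onorm (\<lambda>v. D t y v - D t z v) \<le> L * dist y z powr \<alpha>"
    using holder_D[OF assms, of "\<bar>t\<bar>"] by blast
  have "onorm (D t z) \<le> \<bar>L\<bar> * diameter S powr \<alpha> + onorm (D t z0)" if z: "z \<in> S" for z
  proof -
    have "onorm (D t z) = onorm (\<lambda>v. (D t z v - D t z0 v) + D t z0 v)" by simp
    also have "\<dots> \<le> onorm (\<lambda>v. D t z v - D t z0 v) + onorm (D t z0)"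
      by (rule onorm_triangle[OF bounded_linear_sub[OF bounded_linear_D bounded_linear_D] bounded_linear_D])
    also have "onorm (\<lambda>v. D t z v - D t z0 v) \<le> L * dist z z0 powr \<alpha>"
      using L z \<open>z0 \<in> S\<close> by blast
    also have "\<dots> \<le> \<bar>L\<bar> * dist z z0 powr \<alpha>" by (simp add: mult_right_mono)
    also have "\<dots> \<le> \<bar>L\<bar> * diameter S powr \<alpha>"
      using diameter_bounded_bound[OF compact_imp_bounded[OF assms] z \<open>z0 \<in> S\<close>] alpha_pos
      by (intro mult_left_mono powr_mono2) auto
    finally show ?thesis by simp
  qed
  then show ?thesis by blast
qed simp

lemma flow_remainder_holder:
  assumes "compact S"
  shows "\<exists>H\<ge>0. \<forall>z\<in>S. \<forall>u. norm u \<le> 1 \<longrightarrow>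
    norm (\<Phi> t (z + u) - \<Phi> t z - D t z u) \<le> H * norm u * norm u powr \<alpha>"
proof -
  define S' where "S' = {a + b | a b. a \<in> S \<and> b \<in> cball (0::'a) 1}"
  have "compact S'" unfolding S'_def by (rule compact_sums[OF assms compact_cball])
  then obtain L where L: "\<forall>y\<in>S'. \<forall>z\<in>S'. onorm (\<lambda>v. D t y v - D t z v) \<le> L * dist y z powr \<alpha>"
    using holder_D[of S' "\<bar>t\<bar>"] by blast
  have "norm (\<Phi> t (z + u) - \<Phi> t z - D t z u) \<le> \<bar>L\<bar> * norm u * norm u powr \<alpha>"
    if z: "z \<in> S" and u: "norm u \<le> 1" for z u
  proof -
    have ball: "cball z (norm u) \<subseteq> S'"
    proof
      fix v assume "v \<in> cball z (norm u)"
      then have "v - z \<in> cball 0 1" using u by (simp add: dist_norm norm_minus_commute)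
      moreover have "v = z + (v - z)" by simp
      ultimately show "v \<in> S'" unfolding S'_def using z by blast
    qed
    have "((\<lambda>v. \<Phi> t v - D t z v) has_derivative (\<lambda>w. D t v w - D t z w)) (at v within cball z (norm u))"
      for v
      by (rule has_derivative_at_withinI, intro has_derivative_diff has_derivative_flow
          bounded_linear_imp_has_derivative bounded_linear_D)
    moreover have "onorm (\<lambda>w. D t v w - D t z w) \<le> \<bar>L\<bar> * norm u powr \<alpha>"
      if v: "v \<in> cball z (norm u)" for v
    proof -
      have "v \<in> S'" "z \<in> S'" using ball v by auto
      then have "onorm (\<lambda>w. D t v w - D t z w) \<le> L * dist v z powr \<alpha>" using L by blast
      also have "\<dots> \<le> \<bar>L\<bar> * dist v z powr \<alpha>" by (simp add: mult_right_mono)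
      also have "\<dots> \<le> \<bar>L\<bar> * norm u powr \<alpha>"
        using v alpha_pos by (intro mult_left_mono powr_mono2) (auto simp: dist_commute)
      finally show ?thesis .
    qed
    ultimately have "norm ((\<Phi> t (z + u) - D t z (z + u)) - (\<Phi> t z - D t z z))
        \<le> \<bar>L\<bar> * norm u powr \<alpha> * norm ((z + u) - z)"
      by (intro differentiable_bound[OF convex_cball]) (auto simp: dist_norm)
    then show ?thesis by (simp add: linear_add[OF linear_D] algebra_simps)
  qed
  then show ?thesis by (intro exI[of _ "\<bar>L\<bar>"]) auto
qed

lemma norm_le_power_norm_D:
  assumes B: "\<And>n. onorm (D (-1) (\<Phi> (real n) z)) \<le> B"
  shows "norm v \<le> B ^ n * norm (D (real n) z v)"
proof (induction n arbitrary: v)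
  case (Suc n)
  let ?w = "D (real n) z v"
  have "B \<ge> 0" using B[of 0] onorm_pos_le[OF bounded_linear_D] by (meson order_trans)
  have "\<Phi> 1 (\<Phi> (real n) z) = \<Phi> (real (Suc n)) z" by (simp add: add.commute flip: flow_add)
  moreover have "D 1 (\<Phi> (real n) z) ?w = D (real (Suc n)) z v"
    by (simp add: add.commute flip: D_cocycle)
  ultimately have "norm ?w = norm (D (-1) (\<Phi> (real (Suc n)) z) (D (real (Suc n)) z v))"
    using D_inverse[of 1 "\<Phi> (real n) z" ?w] by simp
  also have "\<dots> \<le> B * norm (D (real (Suc n)) z v)"
    using onorm[OF bounded_linear_D] B \<open>B \<ge> 0\<close> by (meson mult_right_mono norm_ge_zero order_trans)
  finally have w_le: "norm ?w \<le> B * norm (D (real (Suc n)) z v)" .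
  have "norm v \<le> B ^ n * norm ?w" by (rule Suc.IH)
  also have "\<dots> \<le> B ^ n * (B * norm (D (real (Suc n)) z v))"
    using w_le \<open>B \<ge> 0\<close> by (intro mult_left_mono) auto
  also have "\<dots> = B ^ Suc n * norm (D (real (Suc n)) z v)" by simp
  finally show ?case .
qed simp

lemma D_variation_of_constants:
  assumes rec: "\<And>n. f (Suc n) = D 1 (\<Phi> (real n) z) (f n) + b n"
  shows "f N = D (real N) z (f 0) + (\<Sum>j<N. D (real (N - Suc j)) (\<Phi> (real (Suc j)) z) (b j))"
proof (induction N)
  case (Suc N)
  have step: "D 1 (\<Phi> (real N) z) (D (real (N - j)) (\<Phi> (real j) z) v)
      = D (real (Suc N - j)) (\<Phi> (real j) z) v" if "j \<le> N" for j v
  proof -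
    have "\<Phi> (real (N - j)) (\<Phi> (real j) z) = \<Phi> (real N) z"
      using that by (simp flip: flow_add)
    moreover have "real (Suc N - j) = 1 + real (N - j)" using that by (simp add: Suc_diff_le)
    ultimately show ?thesis by (simp add: D_cocycle)
  qed
  have "f (Suc N) = D 1 (\<Phi> (real N) z) (f N) + b N" by (rule rec)
  also have "D 1 (\<Phi> (real N) z) (f N) = D 1 (\<Phi> (real N) z) (D (real N) z (f 0))
      + (\<Sum>j<N. D 1 (\<Phi> (real N) z) (D (real (N - Suc j)) (\<Phi> (real (Suc j)) z) (b j)))"
    unfolding Suc.IH by (simp add: linear_add[OF linear_D] linear_sum[OF linear_D])
  also have "D 1 (\<Phi> (real N) z) (D (real N) z (f 0)) = D (real (Suc N)) z (f 0)"
    using step[of 0 "f 0"] by simp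
  also have "(\<Sum>j<N. D 1 (\<Phi> (real N) z) (D (real (N - Suc j)) (\<Phi> (real (Suc j)) z) (b j)))
      = (\<Sum>j<N. D (real (Suc N - Suc j)) (\<Phi> (real (Suc j)) z) (b j))"
    by (rule sum.cong[OF refl], rule step) simp
  also have "b N = D (real (Suc N - Suc N)) (\<Phi> (real (Suc N)) z) (b N)" by simp
  finally show ?case by (simp add: algebra_simps)
qed simp

end

section \<open>Exponential separation along a compact invariant set\<close>

locale fww_separation =
  fixes \<Phi> :: "real \<Rightarrow> 'a::euclidean_space \<Rightarrow> 'a" and D :: "real \<Rightarrow> 'a \<Rightarrow> 'a \<Rightarrow> 'a"
    and \<alpha> :: real and C :: "'a set" and k :: nat and K :: "'a set" and E F :: "'a \<Rightarrow> 'a set"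
  assumes fww: "FWW \<Phi> D \<alpha> C k"
    and compact_K: "compact K" and invariant_K: "invariant_set \<Phi> K"
    and separation: "exp_separation \<Phi> D C k K E F"

sublocale fww_separation \<subseteq> smooth_flow \<Phi> D \<alpha>
  using fww by unfold_locales (simp add: FWW_def)

context fww_separation
begin

lemma closed_C: "closed C" and scaleR_in_C: "v \<in> C \<Longrightarrow> l *\<^sub>R v \<in> C"
proof -
  have "k_cone C k" using fww unfolding FWW_def by (elim conjE)
  then show "closed C" "v \<in> C \<Longrightarrow> l *\<^sub>R v \<in> C" unfolding k_cone_def by blast+
qed

lemma uminus_in_C: "v \<in> C \<Longrightarrow> - v \<in> C"
  using scaleR_in_C[of v "-1"] by simp

lemma strongly_monotone: "strongly_monotone \<Phi> C"
  using fww unfolding FWW_def by simp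

lemma flow_in_K: "z \<in> K \<Longrightarrow> \<Phi> t z \<in> K"
  using invariant_K unfolding invariant_set_def by blast

lemma gap_continuous_E: "gap_continuous_on K E"
  using separation unfolding exp_separation_def by (elim conjE) assumption

lemma gap_continuous_F: "gap_continuous_on K F"
  using separation unfolding exp_separation_def by (elim conjE) assumption

lemma
  assumes "z \<in> K"
  shows E_subspace: "subspace (E z)" and dim_E: "dim (E z) = k" and F_subspace: "subspace (F z)"
    and E_inter_F: "E z \<inter> F z = {0}" and E_plus_F: "\<exists>e\<in>E z. \<exists>f\<in>F z. u = e + f"
    and E_subset_interior_C: "E z \<subseteq> interior C \<union> {0}" and F_inter_C: "F z \<inter> C = {0}"
proof -
  have "\<forall>z\<in>K. subspace (E z) \<and> dim (E z) = k \<and> subspace (F z) \<and> dim (F z) = DIM('a) - k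
      \<and> E z \<inter> F z = {0} \<and> {e + f | e f. e \<in> E z \<and> f \<in> F z} = UNIV
      \<and> E z \<subseteq> interior C \<union> {0} \<and> F z \<inter> C = {0}"
    using separation unfolding exp_separation_def by (elim conjE) assumption
  note split = this[rule_format, OF assms]
  show "subspace (E z)" using split by (elim conjE)
  show "dim (E z) = k" using split by (elim conjE)
  show "subspace (F z)" using split by (elim conjE)
  show "E z \<inter> F z = {0}" using split by (elim conjE)
  show "E z \<subseteq> interior C \<union> {0}" using split by (elim conjE)
  show "F z \<inter> C = {0}" using split by (elim conjE)
  have "{e + f | e f. e \<in> E z \<and> f \<in> F z} = UNIV" using split by (elim conjE)
  then have "u \<in> {e + f | e f. e \<in> E z \<and> f \<in> F z}" by simp
  then show "\<exists>e\<in>E z. \<exists>f\<in>F z. u = e + f" by blast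
qed

lemma zero_in_C: "0 \<in> C"
proof -
  have "k_cone C k" using fww unfolding FWW_def by (elim conjE)
  then obtain W where "subspace W" "W \<subseteq> C" unfolding k_cone_def by blast
  then show ?thesis using subspace_0 by blast
qed

lemma E_subset_C: "z \<in> K \<Longrightarrow> E z \<subseteq> C"
  using E_subset_interior_C interior_subset zero_in_C by blast

lemma splitting_unique:
  assumes "z \<in> K" "e \<in> E z" "e' \<in> E z" "f \<in> F z" "f' \<in> F z" "e + f = e' + f'"
  shows "e = e'" "f = f'"
proof -
  have "e - e' = f' - f" using assms(6) by (simp add: algebra_simps)
  moreover have "e - e' \<in> E z" using subspace_diff[OF E_subspace[OF assms(1)] assms(2,3)] .
  moreover have "f' - f \<in> F z" using subspace_diff[OF F_subspace[OF assms(1)] assms(5,4)] .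
  ultimately have "e - e' \<in> E z \<inter> F z" by simp
  then have "e - e' = 0" using E_inter_F[OF assms(1)] by blast
  then show "e = e'" "f = f'" using assms(6) by simp_all
qed

lemma D_image_E_F:
  assumes "z \<in> K" "t > 0"
  shows "D t z ` E z = E (\<Phi> t z) \<and> D t z ` F z \<subseteq> F (\<Phi> t z)"
proof -
  have "\<forall>z\<in>K. \<forall>t>0. D t z ` E z = E (\<Phi> t z) \<and> D t z ` F z \<subseteq> F (\<Phi> t z)"
    using separation unfolding exp_separation_def by (elim conjE)
  then show ?thesis using assms by blast
qed

lemma D_maps_E: "z \<in> K \<Longrightarrow> t \<ge> 0 \<Longrightarrow> v \<in> E z \<Longrightarrow> D t z v \<in> E (\<Phi> t z)"
  using D_image_E_F[of z t] by (cases "t = 0") auto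

lemma D_maps_F: "z \<in> K \<Longrightarrow> t \<ge> 0 \<Longrightarrow> v \<in> F z \<Longrightarrow> D t z v \<in> F (\<Phi> t z)"
  using D_image_E_F[of z t] by (cases "t = 0") auto

lemma dominated_splitting:
  obtains M \<gamma> where "M > 0" "0 < \<gamma>" "\<gamma> < 1"
    and "\<And>z t f u. z \<in> K \<Longrightarrow> t \<ge> 0 \<Longrightarrow> f \<in> F z \<Longrightarrow> u \<in> E z \<Longrightarrow>
      norm (D t z f) * norm u \<le> M * \<gamma> powr t * norm (D t z u) * norm f"
proof -
  have "\<exists>M>0. \<exists>\<gamma>. 0 < \<gamma> \<and> \<gamma> < 1 \<and> (\<forall>z\<in>K. \<forall>t\<ge>0. \<forall>f\<in>F z. \<forall>u\<in>E z.
      norm f = 1 \<and> norm u = 1 \<longrightarrow> norm (D t z f) \<le> M * \<gamma> powr t * norm (D t z u))"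
    using separation unfolding exp_separation_def by (elim conjE)
  then obtain M \<gamma> where "M > 0" "0 < \<gamma>" "\<gamma> < 1" and dom: "\<forall>z\<in>K. \<forall>t\<ge>0. \<forall>f\<in>F z. \<forall>u\<in>E z.
      norm f = 1 \<and> norm u = 1 \<longrightarrow> norm (D t z f) \<le> M * \<gamma> powr t * norm (D t z u)"
    by blast
  have "norm (D t z f) * norm u \<le> M * \<gamma> powr t * norm (D t z u) * norm f"
    if "z \<in> K" "t \<ge> 0" "f \<in> F z" "u \<in> E z" for z t f u
  proof (cases "f = 0 \<or> u = 0")
    case False
    then have "norm f > 0" "norm u > 0" by auto
    have "(1 / norm f) *\<^sub>R f \<in> F z" "(1 / norm u) *\<^sub>R u \<in> E z"
      using that E_subspace F_subspace subspace_scale by blast+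
    then have "norm (D t z ((1 / norm f) *\<^sub>R f)) \<le> M * \<gamma> powr t * norm (D t z ((1 / norm u) *\<^sub>R u))"
      using dom that \<open>norm f > 0\<close> \<open>norm u > 0\<close> by simp
    then have "norm (D t z f) / norm f \<le> M * \<gamma> powr t * norm (D t z u) / norm u"
      by (simp add: linear_scale[OF linear_D])
    then show ?thesis using \<open>norm f > 0\<close> \<open>norm u > 0\<close>
      by (simp add: divide_le_eq le_divide_eq mult.commute mult.left_commute)
  qed (auto simp: linear_0[OF linear_D])
  then show ?thesis using that \<open>M > 0\<close> \<open>0 < \<gamma>\<close> \<open>\<gamma> < 1\<close> by blast
qed

lemma norm_F_component_le: "\<exists>c>0. \<forall>z\<in>K. \<forall>e\<in>E z. \<forall>f\<in>F z. norm f \<le> c * norm (e + f)"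
proof -
  obtain \<delta> where "\<delta> > 0" and \<delta>: "\<forall>z\<in>K. \<forall>f\<in>F z. \<forall>c\<in>C. \<delta> * norm f \<le> norm (f - c)"
    using uniformly_transversal_to_cone[OF compact_K gap_continuous_F F_subspace closed_C scaleR_in_C
        F_inter_C] by blast
  have "norm f \<le> 1 / \<delta> * norm (e + f)" if "z \<in> K" "e \<in> E z" "f \<in> F z" for z e f
  proof -
    have "- e \<in> C" using E_subset_C uminus_in_C that by blast
    then have "\<delta> * norm f \<le> norm (f - - e)" using \<delta> that by blast
    then have "\<delta> * norm f \<le> norm (e + f)" by (simp add: add.commute)
    then show ?thesis using \<open>\<delta> > 0\<close> by (simp add: field_simps)
  qed
  then show ?thesis using \<open>\<delta> > 0\<close> by (intro exI[of _ "1 / \<delta>"]) auto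
qed

lemma norm_le_F_component_outside_C:
  "\<exists>c>0. \<forall>z\<in>K. \<forall>e\<in>E z. \<forall>f\<in>F z. e + f \<notin> C \<longrightarrow> norm (e + f) \<le> c * norm f"
proof -
  obtain \<delta> where "\<delta> > 0" and \<delta>: "\<forall>z\<in>K. \<forall>e\<in>E z. \<forall>u. norm u < \<delta> * norm e \<longrightarrow> e + u \<in> C"
    using uniform_cone_neighbourhood[OF compact_K gap_continuous_E E_subspace scaleR_in_C
        E_subset_interior_C] by blast
  have "norm (e + f) \<le> (1 + 1 / \<delta>) * norm f"
    if "z \<in> K" "e \<in> E z" "f \<in> F z" "e + f \<notin> C" for z e f
  proof -
    have "\<not> norm f < \<delta> * norm e" using \<delta> that by blast
    then have "\<delta> * norm e \<le> norm f" by simp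
    then have "norm e \<le> norm f / \<delta>" using \<open>\<delta> > 0\<close> by (simp add: field_simps)
    then show ?thesis using norm_triangle_ineq[of e f] by (simp add: algebra_simps)
  qed
  moreover have "1 + 1 / \<delta> > 0" using \<open>\<delta> > 0\<close> by (simp add: add_pos_pos)
  ultimately show ?thesis by blast
qed

lemma splitting_sequence:
  assumes "\<And>n. p n \<in> K"
  obtains e f where "\<And>n. e n \<in> E (p n)" "\<And>n. f n \<in> F (p n)" "\<And>n. v n = e n + f n"
proof -
  have "\<exists>ef. fst ef \<in> E (p n) \<and> snd ef \<in> F (p n) \<and> v n = fst ef + snd ef" for n
  proof -
    obtain e f where "e \<in> E (p n)" "f \<in> F (p n)" "v n = e + f" using E_plus_F[OF assms] by blast
    then show ?thesis by (intro exI[of _ "(e, f)"]) simp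
  qed
  then have "\<exists>ef. \<forall>n. fst (ef n) \<in> E (p n) \<and> snd (ef n) \<in> F (p n) \<and> v n = fst (ef n) + snd (ef n)"
    by (intro choice allI)
  then obtain ef where "\<forall>n. fst (ef n) \<in> E (p n) \<and> snd (ef n) \<in> F (p n) \<and> v n = fst (ef n) + snd (ef n)"
    by blast
  then show ?thesis using that[of "\<lambda>n. fst (ef n)" "\<lambda>n. snd (ef n)"] by blast
qed

lemma F_component_recursion:
  assumes "z \<in> K"
  obtains e f a b where "\<And>n. e n \<in> E (\<Phi> (real n) z)" "\<And>n. f n \<in> F (\<Phi> (real n) z)"
    "\<And>n. w n = e n + f n" "\<And>n. a n \<in> E (\<Phi> (real (Suc n)) z)" "\<And>n. b n \<in> F (\<Phi> (real (Suc n)) z)"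
    "\<And>n. w (Suc n) - D 1 (\<Phi> (real n) z) (w n) = a n + b n"
    "\<And>n. f (Suc n) = D 1 (\<Phi> (real n) z) (f n) + b n"
proof -
  obtain e f where e: "\<And>n. e n \<in> E (\<Phi> (real n) z)" and f: "\<And>n. f n \<in> F (\<Phi> (real n) z)"
    and w: "\<And>n. w n = e n + f n"
    using splitting_sequence[of "\<lambda>n. \<Phi> (real n) z" w, OF flow_in_K[OF assms]] by blast
  obtain a b where a: "\<And>n. a n \<in> E (\<Phi> (real (Suc n)) z)" and b: "\<And>n. b n \<in> F (\<Phi> (real (Suc n)) z)"
    and R: "\<And>n. w (Suc n) - D 1 (\<Phi> (real n) z) (w n) = a n + b n"
    using splitting_sequence[of "\<lambda>n. \<Phi> (real (Suc n)) z" "\<lambda>n. w (Suc n) - D 1 (\<Phi> (real n) z) (w n)",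
        OF flow_in_K[OF assms]] by blast
  have "f (Suc n) = D 1 (\<Phi> (real n) z) (f n) + b n" for n
  proof -
    have next_point: "\<Phi> 1 (\<Phi> (real n) z) = \<Phi> (real (Suc n)) z"
      by (simp add: add.commute flip: flow_add)
    have sum_eq: "e (Suc n) + f (Suc n)
        = (D 1 (\<Phi> (real n) z) (e n) + a n) + (D 1 (\<Phi> (real n) z) (f n) + b n)"
      using R[of n] w[of n] w[of "Suc n"] by (simp add: linear_add[OF linear_D] algebra_simps)
    have "\<Phi> (real n) z \<in> K" using flow_in_K[OF assms] .
    then have "D 1 (\<Phi> (real n) z) (e n) \<in> E (\<Phi> (real (Suc n)) z)"
      "D 1 (\<Phi> (real n) z) (f n) \<in> F (\<Phi> (real (Suc n)) z)"
      unfolding next_point[symmetric] using D_maps_E D_maps_F e f by simp_all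
    then have "D 1 (\<Phi> (real n) z) (e n) + a n \<in> E (\<Phi> (real (Suc n)) z)"
      and "D 1 (\<Phi> (real n) z) (f n) + b n \<in> F (\<Phi> (real (Suc n)) z)"
      using a b E_subspace F_subspace flow_in_K[OF assms] subspace_add by blast+
    from splitting_unique(2)[OF flow_in_K[OF assms] e this(1) f this(2) sum_eq] show ?thesis .
  qed
  then show ?thesis using that e f w a b R by blast
qed

end

section \<open>Growth along a regular orbit\<close>

definition min_growth :: "(real \<Rightarrow> 'a::euclidean_space \<Rightarrow> 'a \<Rightarrow> 'a) \<Rightarrow> ('a \<Rightarrow> 'a set) \<Rightarrow> 'a \<Rightarrow> real \<Rightarrow> real"
  where "min_growth D E x t = (INF v\<in>{v \<in> E x. norm v = 1}. norm (D t x v))"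

lemma lyap_quot_min_growth: "lyap_quot D E x t = ln (min_growth D E x t) / t"
  unfolding lyap_quot_def min_growth_def ..

context fww_separation
begin

lemma unit_sphere_E_nonempty:
  assumes "k \<ge> 1" "z \<in> K"
  shows "{v \<in> E z. norm v = 1} \<noteq> {}"
proof -
  have "\<not> E z \<subseteq> {0}" using dim_E[OF assms(2)] assms(1) dim_eq_0[of "E z"] by auto
  then obtain v where "v \<in> E z" "v \<noteq> 0" by blast
  then have "(1 / norm v) *\<^sub>R v \<in> {v \<in> E z. norm v = 1}"
    using E_subspace[OF assms(2)] subspace_scale by auto
  then show ?thesis by blast
qed

lemma min_growth_le: "v \<in> E z \<Longrightarrow> norm v = 1 \<Longrightarrow> min_growth D E z t \<le> norm (D t z v)"
  unfolding min_growth_def by (rule cINF_lower) (auto intro: bdd_belowI[of _ 0])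

lemma min_growth_exp_lower_bound:
  assumes "k \<ge> 1" "z \<in> K"
  shows "\<exists>B\<ge>1. \<forall>n. 1 / B ^ n \<le> min_growth D E z (real n)"
proof -
  obtain B0 where B0: "\<forall>y\<in>K. onorm (D (-1) y) \<le> B0"
    using onorm_D_bounded[OF compact_K] by blast
  define B where "B = max 1 B0"
  have "1 / B ^ n \<le> min_growth D E z (real n)" for n
    unfolding min_growth_def
  proof (rule cINF_greatest[OF unit_sphere_E_nonempty[OF assms]])
    fix v assume "v \<in> {v \<in> E z. norm v = 1}"
    moreover have "norm v \<le> B ^ n * norm (D (real n) z v)"
      using B0 flow_in_K[OF assms(2)] unfolding B_def
      by (intro norm_le_power_norm_D) (meson max.coboundedI2)
    moreover have "B ^ n > 0" unfolding B_def by simp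
    ultimately show "1 / B ^ n \<le> norm (D (real n) z v)" by (simp add: field_simps)
  qed
  then show ?thesis unfolding B_def by (intro exI[of _ "max 1 B0"]) auto
qed

lemma min_growth_pos:
  assumes "k \<ge> 1" "z \<in> K"
  shows "min_growth D E z (real n) > 0"
proof -
  obtain B where "B \<ge> 1" "\<forall>n. 1 / B ^ n \<le> min_growth D E z (real n)"
    using min_growth_exp_lower_bound[OF assms] by blast
  moreover have "1 / B ^ n > 0" using \<open>B \<ge> 1\<close> by simp
  ultimately show ?thesis by (meson less_le_trans)
qed

text \<open>The exponential lower bound on the growth in \<open>E\<close> rules out the limit \<open>-\<infinity>\<close>.\<close>

lemma LIMSEQ_ln_min_growth:
  assumes "k \<ge> 1" "z \<in> K" "lyap_regular D E z" "k_lyapunov D E z \<le> 0"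
  shows "\<exists>l\<le>0. (\<lambda>n. ln (min_growth D E z (real n)) / real n) \<longlonglongrightarrow> l"
proof -
  obtain L where L: "((\<lambda>t. ereal (lyap_quot D E z t)) \<longlongrightarrow> L) at_top"
    using assms(3) unfolding lyap_regular_def by blast
  have "k_lyapunov D E z = L" unfolding k_lyapunov_def by (rule lim_imp_Limsup[OF _ L]) simp
  then have "L \<le> 0" using assms(4) by simp
  have lim: "(\<lambda>n. ereal (ln (min_growth D E z (real n)) / real n)) \<longlonglongrightarrow> L"
    using filterlim_compose[OF L filterlim_real_sequentially] by (simp add: lyap_quot_min_growth)
  obtain B where "B \<ge> 1" and B: "\<forall>n. 1 / B ^ n \<le> min_growth D E z (real n)"
    using min_growth_exp_lower_bound[OF assms(1,2)] by blast
  have "- ln B \<le> ln (min_growth D E z (real n)) / real n" if "n \<ge> 1" for n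
  proof -
    have "ln (1 / B ^ n) \<le> ln (min_growth D E z (real n))"
      using B \<open>B \<ge> 1\<close> min_growth_pos[OF assms(1,2), of n] by (simp del: divide_const_simps)
    then have "- (real n * ln B) \<le> ln (min_growth D E z (real n))"
      using \<open>B \<ge> 1\<close> by (simp add: ln_div ln_realpow)
    then show ?thesis using that by (simp add: field_simps)
  qed
  then have "ereal (- ln B) \<le> L"
    by (intro tendsto_le[OF _ lim tendsto_const]) (auto simp: eventually_sequentially)
  then obtain l where "L = ereal l" using \<open>L \<le> 0\<close> by (cases L) auto
  then show ?thesis using lim \<open>L \<le> 0\<close> by auto
qed

lemma F_growth_le_min_growth_ratio:
  assumes "k \<ge> 1" "z \<in> K"
  obtains M \<gamma> where "M > 0" "0 < \<gamma>" "\<gamma> < 1"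
    "\<And>j m f. f \<in> F (\<Phi> (real j) z) \<Longrightarrow> norm (D (real m) (\<Phi> (real j) z) f) * min_growth D E z (real j)
      \<le> M * \<gamma> ^ m * norm f * min_growth D E z (real (j + m))"
proof -
  obtain M \<gamma> where "M > 0" "0 < \<gamma>" "\<gamma> < 1" and dom: "\<And>z t f u. z \<in> K \<Longrightarrow> t \<ge> 0 \<Longrightarrow> f \<in> F z \<Longrightarrow>
      u \<in> E z \<Longrightarrow> norm (D t z f) * norm u \<le> M * \<gamma> powr t * norm (D t z u) * norm f"
    using dominated_splitting by blast
  have "norm (D (real m) (\<Phi> (real j) z) f) * min_growth D E z (real j)
      \<le> M * \<gamma> ^ m * norm f * min_growth D E z (real (j + m))"
    if f: "f \<in> F (\<Phi> (real j) z)" for j m f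
  proof (cases "f = 0")
    case False
    let ?Df = "norm (D (real m) (\<Phi> (real j) z) f)"
    have "M * \<gamma> ^ m * norm f > 0" using \<open>M > 0\<close> \<open>0 < \<gamma>\<close> False by simp
    have "?Df * min_growth D E z (real j) / (M * \<gamma> ^ m * norm f) \<le> min_growth D E z (real (j + m))"
      unfolding min_growth_def[of D E z "real (j + m)"]
    proof (rule cINF_greatest[OF unit_sphere_E_nonempty[OF assms]])
      fix v assume v: "v \<in> {v \<in> E z. norm v = 1}"
      let ?u = "D (real j) z v"
      have "?u \<in> E (\<Phi> (real j) z)" using D_maps_E assms(2) v by simp
      then have "?Df * norm ?u \<le> M * \<gamma> ^ m * norm (D (real m) (\<Phi> (real j) z) ?u) * norm f"
        using dom[of "\<Phi> (real j) z" "real m" f ?u] flow_in_K[OF assms(2)] f \<open>0 < \<gamma>\<close>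
        by (simp add: powr_realpow)
      also have "D (real m) (\<Phi> (real j) z) ?u = D (real (j + m)) z v"
        by (simp add: add.commute flip: D_cocycle)
      finally have "?Df * norm ?u \<le> M * \<gamma> ^ m * norm f * norm (D (real (j + m)) z v)"
        by (simp add: ac_simps)
      moreover have "?Df * min_growth D E z (real j) \<le> ?Df * norm ?u"
        using min_growth_le v by (simp add: mult_left_mono)
      ultimately show "?Df * min_growth D E z (real j) / (M * \<gamma> ^ m * norm f) \<le> norm (D (real (j + m)) z v)"
        using \<open>M * \<gamma> ^ m * norm f > 0\<close> by (simp add: divide_le_eq mult.commute)
    qed
    then show ?thesis using \<open>M * \<gamma> ^ m * norm f > 0\<close> by (simp add: divide_le_eq mult.commute)
  qed (simp add: linear_0[OF linear_D])
  then show ?thesis using that \<open>M > 0\<close> \<open>0 < \<gamma>\<close> \<open>\<gamma> < 1\<close> by blast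
qed

lemma F_contraction_along_regular_orbit:
  assumes "k \<ge> 1" "z \<in> K" "lyap_regular D E z" "k_lyapunov D E z \<le> 0"
  obtains \<gamma> where "0 < \<gamma>" "\<gamma> < 1"
    "\<And>\<epsilon>. \<epsilon> > 0 \<Longrightarrow> \<exists>K0\<ge>1. \<forall>j m. \<forall>f\<in>F (\<Phi> (real j) z).
      norm (D (real m) (\<Phi> (real j) z) f) \<le> K0 * (\<gamma> * exp \<epsilon>) ^ m * exp (2 * \<epsilon>) ^ j * norm f"
proof -
  let ?g = "\<lambda>n. min_growth D E z (real n)"
  obtain M \<gamma> where "M > 0" "0 < \<gamma>" "\<gamma> < 1" and ratio: "\<And>j m f. f \<in> F (\<Phi> (real j) z) \<Longrightarrow>
      norm (D (real m) (\<Phi> (real j) z) f) * ?g j \<le> M * \<gamma> ^ m * norm f * ?g (j + m)"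
    using F_growth_le_min_growth_ratio[OF assms(1,2)] by blast
  obtain l where "l \<le> 0" and l: "(\<lambda>n. ln (?g n) / real n) \<longlonglongrightarrow> l"
    using LIMSEQ_ln_min_growth[OF assms] by blast
  have g_pos: "?g n > 0" for n using min_growth_pos[OF assms(1,2)] .
  have "\<exists>K0\<ge>1. \<forall>j m. \<forall>f\<in>F (\<Phi> (real j) z).
      norm (D (real m) (\<Phi> (real j) z) f) \<le> K0 * (\<gamma> * exp \<epsilon>) ^ m * exp (2 * \<epsilon>) ^ j * norm f"
    if "\<epsilon> > 0" for \<epsilon>
  proof -
    obtain A where "A \<ge> 0" and A: "\<And>n. \<bar>ln (?g n) - l * real n\<bar> \<le> \<epsilon> * real n + A"
      using tempered_bound_of_LIMSEQ_div[OF \<open>\<epsilon> > 0\<close> l] by blast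
    have ratio_le: "?g (j + m) / ?g j \<le> exp (2 * A) * exp \<epsilon> ^ m * exp (2 * \<epsilon>) ^ j" for j m
      using ratio_le_of_tempered_bound[OF g_pos \<open>l \<le> 0\<close> A] .
    define K0 where "K0 = max 1 (M * exp (2 * A))"
    have "norm (D (real m) (\<Phi> (real j) z) f) \<le> K0 * (\<gamma> * exp \<epsilon>) ^ m * exp (2 * \<epsilon>) ^ j * norm f"
      if f: "f \<in> F (\<Phi> (real j) z)" for j m f
    proof -
      have "norm (D (real m) (\<Phi> (real j) z) f) * ?g j \<le> M * \<gamma> ^ m * norm f * ?g (j + m)"
        by (rule ratio[OF f])
      then have "norm (D (real m) (\<Phi> (real j) z) f) \<le> M * \<gamma> ^ m * norm f * ?g (j + m) / ?g j"
        using g_pos[of j] by (simp only: pos_le_divide_eq)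
      then have "norm (D (real m) (\<Phi> (real j) z) f) \<le> M * \<gamma> ^ m * norm f * (?g (j + m) / ?g j)"
        by (simp only: times_divide_eq_right)
      also have "\<dots> \<le> M * \<gamma> ^ m * norm f * (exp (2 * A) * exp \<epsilon> ^ m * exp (2 * \<epsilon>) ^ j)"
        using ratio_le \<open>M > 0\<close> \<open>0 < \<gamma>\<close> by (intro mult_left_mono) auto
      also have "\<dots> = (M * exp (2 * A)) * (\<gamma> * exp \<epsilon>) ^ m * exp (2 * \<epsilon>) ^ j * norm f"
        by (simp add: power_mult_distrib)
      also have "\<dots> \<le> K0 * (\<gamma> * exp \<epsilon>) ^ m * exp (2 * \<epsilon>) ^ j * norm f"
        unfolding K0_def using \<open>0 < \<gamma>\<close> by (intro mult_right_mono) auto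
      finally show ?thesis .
    qed
    then show ?thesis unfolding K0_def by (intro exI[of _ K0]) (auto simp: K0_def)
  qed
  then show ?thesis using that \<open>0 < \<gamma>\<close> \<open>\<gamma> < 1\<close> by blast
qed

lemma norm_F_variation_of_constants_le:
  assumes "z \<in> K"
    and contraction: "\<And>j m f. f \<in> F (\<Phi> (real j) z) \<Longrightarrow>
      norm (D (real m) (\<Phi> (real j) z) f) \<le> K0 * \<rho> ^ m * \<tau> ^ j * norm f"
    and f: "f 0 \<in> F z" and b: "\<And>n. b n \<in> F (\<Phi> (real (Suc n)) z)"
    and rec: "\<And>n. f (Suc n) = D 1 (\<Phi> (real n) z) (f n) + b n"
  shows "norm (f N) \<le> K0 * \<rho> ^ N * norm (f 0) + (\<Sum>j<N. K0 * \<rho> ^ (N - Suc j) * \<tau> ^ Suc j * norm (b j))"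
proof -
  have "norm (f N) \<le> norm (D (real N) z (f 0))
      + (\<Sum>j<N. norm (D (real (N - Suc j)) (\<Phi> (real (Suc j)) z) (b j)))"
    unfolding D_variation_of_constants[OF rec, of N]
    by (rule order_trans[OF norm_triangle_ineq add_left_mono[OF norm_sum]])
  also have "norm (D (real N) z (f 0)) \<le> K0 * \<rho> ^ N * norm (f 0)"
    using contraction[of "f 0" 0 N] f by simp
  also have "(\<Sum>j<N. norm (D (real (N - Suc j)) (\<Phi> (real (Suc j)) z) (b j)))
      \<le> (\<Sum>j<N. K0 * \<rho> ^ (N - Suc j) * \<tau> ^ Suc j * norm (b j))"
    by (intro sum_mono contraction b)
  finally show ?thesis by simp
qed

section \<open>Convergence outside the cone\<close>

lemma orbit_difference_geometric_decay:
  assumes x: "x \<in> K" and \<rho>: "0 < \<rho>" "\<rho> < 1" and \<tau>: "\<tau> > 0" "\<tau> * \<rho> powr \<alpha> < 1" and "K0 \<ge> 1"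
    and contraction: "\<And>j m f. f \<in> F (\<Phi> (real j) x) \<Longrightarrow>
      norm (D (real m) (\<Phi> (real j) x) f) \<le> K0 * \<rho> ^ m * \<tau> ^ j * norm f"
    and cF: "cF > 0" "\<forall>z\<in>K. \<forall>e\<in>E z. \<forall>f\<in>F z. norm f \<le> cF * norm (e + f)"
    and cE: "cE > 0" "\<forall>z\<in>K. \<forall>e\<in>E z. \<forall>f\<in>F z. e + f \<notin> C \<longrightarrow> norm (e + f) \<le> cE * norm f"
    and H: "H \<ge> 0" "\<forall>z\<in>K. \<forall>u. norm u \<le> 1 \<longrightarrow>
      norm (\<Phi> 1 (z + u) - \<Phi> 1 z - D 1 z u) \<le> H * norm u * norm u powr \<alpha>"
    and small: "2 * cE * K0 * cF * norm (y - x) \<le> 1"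
      "2 * K0 * (cF * H * cE) * \<tau> / (1 - \<tau> * \<rho> powr \<alpha>) * (2 * cE * K0 * cF * norm (y - x)) powr \<alpha> \<le> \<rho>"
    and outside: "\<forall>n. \<Phi> (real n) y - \<Phi> (real n) x \<notin> C"
  shows "norm (\<Phi> (real n) y - \<Phi> (real n) x) \<le> cE * 2 * K0 * cF * norm (y - x) * \<rho> ^ n"
proof -
  define w where "w n = \<Phi> (real n) y - \<Phi> (real n) x" for n
  obtain e f a b where e: "\<And>n. e n \<in> E (\<Phi> (real n) x)" and f: "\<And>n. f n \<in> F (\<Phi> (real n) x)"
    and w: "\<And>n. w n = e n + f n" and a: "\<And>n. a n \<in> E (\<Phi> (real (Suc n)) x)"
    and b: "\<And>n. b n \<in> F (\<Phi> (real (Suc n)) x)"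
    and R: "\<And>n. w (Suc n) - D 1 (\<Phi> (real n) x) (w n) = a n + b n"
    and rec: "\<And>n. f (Suc n) = D 1 (\<Phi> (real n) x) (f n) + b n"
    using F_component_recursion[OF x, of w] by blast
  have orbit: "\<Phi> (real n) x \<in> K" for n using flow_in_K[OF x] .
  have w_le: "norm (w n) \<le> cE * norm (f n)" for n
  proof -
    have "e n + f n \<notin> C" using outside w[of n] unfolding w_def by metis
    then have "norm (e n + f n) \<le> cE * norm (f n)" using cE(2) orbit e f by blast
    then show ?thesis using w[of n] by simp
  qed
  have f0: "norm (f 0) \<le> cF * norm (y - x)"
    using cF(2) orbit[of 0] e[of 0] f[of 0] w[of 0] unfolding w_def by simp
  have b_le: "norm (b j) \<le> cF * H * cE * norm (f j) * (cE * norm (f j)) powr \<alpha>"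
    if "cE * norm (f j) \<le> 1" for j
  proof -
    have "a j + b j = \<Phi> 1 (\<Phi> (real j) x + w j) - \<Phi> 1 (\<Phi> (real j) x) - D 1 (\<Phi> (real j) x) (w j)"
      unfolding R[symmetric] unfolding w_def by (simp add: add.commute flip: flow_add)
    moreover have "norm (w j) \<le> 1" using w_le that by (rule order_trans)
    ultimately have "norm (a j + b j) \<le> H * norm (w j) * norm (w j) powr \<alpha>"
      using H(2) orbit by auto
    also have "\<dots> \<le> H * (cE * norm (f j)) * (cE * norm (f j)) powr \<alpha>"
      using w_le H(1) cE(1) alpha_pos by (intro mult_mono powr_mono2 mult_left_mono) auto
    finally have "cF * norm (a j + b j) \<le> cF * (H * (cE * norm (f j)) * (cE * norm (f j)) powr \<alpha>)"
      using cF(1) by simp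
    moreover have "norm (b j) \<le> cF * norm (a j + b j)" using cF(2) orbit a b by blast
    ultimately show ?thesis by (simp add: ac_simps)
  qed
  have "f 0 \<in> F x" using f[of 0] by simp
  have decay: "norm (f n) \<le> 2 * K0 * \<rho> ^ n * norm (f 0)"
  proof (rule holder_perturbed_geometric_decay[where \<beta> = "\<lambda>j. norm (b j)" and c = cE and G = "cF * H * cE"])
    show "norm (f N) \<le> K0 * \<rho> ^ N * norm (f 0) + (\<Sum>j<N. K0 * \<rho> ^ (N - Suc j) * \<tau> ^ Suc j * norm (b j))"
      for N by (rule norm_F_variation_of_constants_le[OF x contraction \<open>f 0 \<in> F x\<close> b rec])
    have f0_small: "2 * cE * K0 * norm (f 0) \<le> 2 * cE * K0 * cF * norm (y - x)"
      using f0 cE(1) \<open>K0 \<ge> 1\<close> by simp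
    then show "2 * cE * K0 * norm (f 0) \<le> 1" using small(1) by linarith
    have "(2 * cE * K0 * norm (f 0)) powr \<alpha> \<le> (2 * cE * K0 * cF * norm (y - x)) powr \<alpha>"
      using f0_small alpha_pos cE(1) \<open>K0 \<ge> 1\<close> by (intro powr_mono2) auto
    moreover have "2 * K0 * (cF * H * cE) * \<tau> / (1 - \<tau> * \<rho> powr \<alpha>) \<ge> 0"
      using \<tau> \<open>K0 \<ge> 1\<close> cF(1) H(1) cE(1) by simp
    ultimately show "2 * K0 * (cF * H * cE) * \<tau> / (1 - \<tau> * \<rho> powr \<alpha>) * (2 * cE * K0 * norm (f 0)) powr \<alpha>
        \<le> \<rho>"
      using small(2) by (meson mult_left_mono order_trans)
  qed (use \<rho> \<tau> alpha_pos \<open>K0 \<ge> 1\<close> H(1) cE(1) cF(1) b_le in auto)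
  have "norm (w n) \<le> cE * norm (f n)" by (rule w_le)
  also have "\<dots> \<le> cE * (2 * K0 * \<rho> ^ n * norm (f 0))"
    using decay cE(1) by (intro mult_left_mono) auto
  also have "\<dots> \<le> cE * (2 * K0 * \<rho> ^ n * (cF * norm (y - x)))"
    using f0 cE(1) \<rho> \<open>K0 \<ge> 1\<close> by (intro mult_left_mono) auto
  finally show ?thesis unfolding w_def by (simp add: ac_simps)
qed

lemma orbit_convergence_outside_C:
  assumes x: "x \<in> K" and \<rho>: "0 < \<rho>" "\<rho> < 1" and \<tau>: "\<tau> > 0" "\<tau> * \<rho> powr \<alpha> < 1" and "K0 \<ge> 1"
    and contraction: "\<And>j m f. f \<in> F (\<Phi> (real j) x) \<Longrightarrow>
      norm (D (real m) (\<Phi> (real j) x) f) \<le> K0 * \<rho> ^ m * \<tau> ^ j * norm f"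
  shows "\<exists>\<eta>>0. \<forall>y. norm (y - x) < \<eta> \<longrightarrow> (\<forall>n. \<Phi> (real n) y - \<Phi> (real n) x \<notin> C) \<longrightarrow>
    (\<lambda>n. norm (\<Phi> (real n) y - \<Phi> (real n) x)) \<longlonglongrightarrow> 0"
proof -
  obtain cF where cF: "cF > 0" "\<forall>z\<in>K. \<forall>e\<in>E z. \<forall>f\<in>F z. norm f \<le> cF * norm (e + f)"
    using norm_F_component_le by blast
  obtain cE where cE: "cE > 0" "\<forall>z\<in>K. \<forall>e\<in>E z. \<forall>f\<in>F z. e + f \<notin> C \<longrightarrow> norm (e + f) \<le> cE * norm f"
    using norm_le_F_component_outside_C by blast
  obtain H where H: "H \<ge> 0" "\<forall>z\<in>K. \<forall>u. norm u \<le> 1 \<longrightarrow>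
      norm (\<Phi> 1 (z + u) - \<Phi> 1 z - D 1 z u) \<le> H * norm u * norm u powr \<alpha>"
    using flow_remainder_holder[OF compact_K] by blast
  define Q where "Q = 2 * K0 * (cF * H * cE) * \<tau> / (1 - \<tau> * \<rho> powr \<alpha>)"
  have "Q \<ge> 0" unfolding Q_def using cF H cE \<open>K0 \<ge> 1\<close> \<tau> by simp
  then obtain r where "r > 0" and r: "\<forall>s. 0 \<le> s \<and> s \<le> r \<longrightarrow> s \<le> 1 \<and> Q * s powr \<alpha> \<le> \<rho>"
    using exists_radius_powr_le \<rho>(1) alpha_pos by blast
  define \<eta> where "\<eta> = r / (2 * cE * K0 * cF)"
  have "2 * cE * K0 * cF > 0" using cE cF \<open>K0 \<ge> 1\<close> by simp
  then have "\<eta> > 0" unfolding \<eta>_def using \<open>r > 0\<close> by simp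
  have "(\<lambda>n. norm (\<Phi> (real n) y - \<Phi> (real n) x)) \<longlonglongrightarrow> 0"
    if "norm (y - x) < \<eta>" and outside: "\<forall>n. \<Phi> (real n) y - \<Phi> (real n) x \<notin> C" for y
  proof -
    have "2 * cE * K0 * cF * norm (y - x) \<le> r"
      using that(1) \<open>2 * cE * K0 * cF > 0\<close> unfolding \<eta>_def by (simp add: field_simps)
    with r have "2 * cE * K0 * cF * norm (y - x) \<le> 1"
      "Q * (2 * cE * K0 * cF * norm (y - x)) powr \<alpha> \<le> \<rho>"
      using \<open>2 * cE * K0 * cF > 0\<close> by auto
    then have decay: "norm (\<Phi> (real n) y - \<Phi> (real n) x) \<le> cE * 2 * K0 * cF * norm (y - x) * \<rho> ^ n"
      for n
      using orbit_difference_geometric_decay[OF x \<rho> \<tau> \<open>K0 \<ge> 1\<close> contraction cF cE H _ _ outside]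
      unfolding Q_def by blast
    have lim: "(\<lambda>n. cE * 2 * K0 * cF * norm (y - x) * \<rho> ^ n) \<longlonglongrightarrow> 0"
      by (rule tendsto_mult_right_zero[OF LIMSEQ_power_zero]) (use \<rho> in simp)
    show ?thesis by (intro tendsto_sandwich[OF _ _ tendsto_const lim]) (simp_all add: decay)
  qed
  then show ?thesis using \<open>\<eta> > 0\<close> by blast
qed

lemma regular_point_attracts_outside_C:
  assumes "k \<ge> 1" "x \<in> K" "lyap_regular D E x" "k_lyapunov D E x \<le> 0"
  shows "\<exists>\<eta>>0. \<forall>y. norm (y - x) < \<eta> \<longrightarrow> (\<forall>n. \<Phi> (real n) y - \<Phi> (real n) x \<notin> C) \<longrightarrow>
    ((\<lambda>t. norm (\<Phi> t x - \<Phi> t y)) \<longlongrightarrow> 0) at_top"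
proof -
  obtain \<gamma> where \<gamma>: "0 < \<gamma>" "\<gamma> < 1" and contraction: "\<And>\<epsilon>. \<epsilon> > 0 \<Longrightarrow> \<exists>K0\<ge>1. \<forall>j m. \<forall>f\<in>F (\<Phi> (real j) x).
      norm (D (real m) (\<Phi> (real j) x) f) \<le> K0 * (\<gamma> * exp \<epsilon>) ^ m * exp (2 * \<epsilon>) ^ j * norm f"
    using F_contraction_along_regular_orbit[OF assms] by blast
  obtain \<epsilon> where "\<epsilon> > 0" "\<gamma> * exp \<epsilon> < 1" "exp (2 * \<epsilon>) * (\<gamma> * exp \<epsilon>) powr \<alpha> < 1"
    using exists_contraction_margin[OF \<gamma> alpha_pos] by blast
  moreover obtain K0 where "K0 \<ge> 1" "\<forall>j m. \<forall>f\<in>F (\<Phi> (real j) x).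
      norm (D (real m) (\<Phi> (real j) x) f) \<le> K0 * (\<gamma> * exp \<epsilon>) ^ m * exp (2 * \<epsilon>) ^ j * norm f"
    using contraction[OF \<open>\<epsilon> > 0\<close>] by blast
  ultimately have "\<exists>\<eta>>0. \<forall>y. norm (y - x) < \<eta> \<longrightarrow> (\<forall>n. \<Phi> (real n) y - \<Phi> (real n) x \<notin> C) \<longrightarrow>
      (\<lambda>n. norm (\<Phi> (real n) y - \<Phi> (real n) x)) \<longlonglongrightarrow> 0"
    using \<gamma> by (intro orbit_convergence_outside_C[OF \<open>x \<in> K\<close>, of "\<gamma> * exp \<epsilon>" "exp (2 * \<epsilon>)" K0]) auto
  then show ?thesis
    using tendsto_flow_difference_of_sequentially[OF compact_K flow_in_K[OF \<open>x \<in> K\<close>]] by blast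
qed

end

theorem lemma4p1:
  fixes \<Phi> :: "real \<Rightarrow> 'a::euclidean_space \<Rightarrow> 'a"
    and D :: "real \<Rightarrow> 'a \<Rightarrow> 'a \<Rightarrow> 'a"
    and C K :: "'a set" and E F :: "'a \<Rightarrow> 'a set" and x :: 'a
  assumes "FWW \<Phi> D \<alpha> C k"
    and "k \<ge> 1"
    and "compact K" and "invariant_set \<Phi> K"
    and "exp_separation \<Phi> D C k K E F"
    and "x \<in> K" and "lyap_regular D E x" and "k_lyapunov D E x \<le> 0"
  shows "\<exists>V. open V \<and> x \<in> V \<and> (\<forall>y\<in>V.
           ((\<lambda>t. norm (\<Phi> t x - \<Phi> t y)) \<longlongrightarrow> 0) at_top
         \<or> (\<exists>T>0. \<Phi> T x - \<Phi> T y \<in> C \<and> (\<forall>t>T. \<Phi> t x - \<Phi> t y \<in> interior C)))"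
proof -
  interpret fww_separation \<Phi> D \<alpha> C k K E F
    using assms(1,3-5) by unfold_locales
  obtain \<eta> where "\<eta> > 0" and \<eta>: "\<forall>y. norm (y - x) < \<eta> \<longrightarrow> (\<forall>n. \<Phi> (real n) y - \<Phi> (real n) x \<notin> C)
      \<longrightarrow> ((\<lambda>t. norm (\<Phi> t x - \<Phi> t y)) \<longlongrightarrow> 0) at_top"
    using regular_point_attracts_outside_C[OF assms(2,6-8)] by blast
  have "((\<lambda>t. norm (\<Phi> t x - \<Phi> t y)) \<longlongrightarrow> 0) at_top
      \<or> (\<exists>T>0. \<Phi> T x - \<Phi> T y \<in> C \<and> (\<forall>t>T. \<Phi> t x - \<Phi> t y \<in> interior C))"
    if "y \<in> ball x \<eta>" for y
  proof (cases "\<exists>t\<ge>0. \<Phi> t x - \<Phi> t y \<in> C")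
    case True
    then obtain t where "t \<ge> 0" "\<Phi> t x - \<Phi> t y \<in> C" by blast
    show ?thesis
    proof (cases "x = y")
      case False
      then show ?thesis
        using strongly_monotone_enters_interior[OF strongly_monotone False \<open>t \<ge> 0\<close>] \<open>_ \<in> C\<close> by blast
    qed simp
  next
    case False
    have "\<Phi> (real n) y - \<Phi> (real n) x \<notin> C" for n
      using False uminus_in_C[of "\<Phi> (real n) y - \<Phi> (real n) x"] by force
    moreover have "norm (y - x) < \<eta>" using that by (simp add: dist_norm norm_minus_commute)
    ultimately show ?thesis using \<eta> by blast
  qed
  then show ?thesis using \<open>\<eta> > 0\<close> by (intro exI[of _ "ball x \<eta>"]) auto
qed

end
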